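(* Let $f:\mathbb{R}\to\mathbb{R}$ be a function, let $I\subset\mathbb{R}$ be an interval, and let $\Phi$ be a Young function satisfying the $\nabla_2$-condition. If there exists $D>0$ such that \[ |f(x)-f(y)|\le\left\{\Phi\left(\frac{1}{D|x-y|}\right)\right\}^{-1} \] for all $x,y\in I$ with $x\neq y$, then $f$ is constant on $I$.
   Context: A Young function is a map $\Phi:[0,\infty)\to[0,\infty)$ that is positive on $(0,\infty)$, convex, with $\lim_{t\downarrow0}\Phi(t)=\Phi(0)=0$. $\Phi$ satisfies the $\nabla_2$-condition if there is a constant $k>1$ with $\Phi(t)\le\frac{1}{2k}\Phi(kt)$ for all $t>0$. *)

theory Defs
  imports "HOL-Analysis.Analysis"
begin

text \<open>Young function: a map [0,\<infinity>) \<rightarrow> [0,\<infinity>), positive on (0,\<infinity>), convex,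
  with Phi(0) = 0 and Phi(t) \<rightarrow> 0 as t decreases to 0.
  Represented as a function real \<Rightarrow> real; only its values on [0,\<infinity>) matter.\<close>
definition young_function :: "(real \<Rightarrow> real) \<Rightarrow> bool" where
  "young_function \<Phi> \<longleftrightarrow>
     (\<forall>t\<ge>0. \<Phi> t \<ge> 0) \<and>
     (\<forall>t>0. \<Phi> t > 0) \<and>
     convex_on {0..} \<Phi> \<and>
     \<Phi> 0 = 0 \<and>
     (\<Phi> \<longlongrightarrow> 0) (at_right 0)"

definition nabla2_condition :: "(real \<Rightarrow> real) \<Rightarrow> bool" where
  "nabla2_condition \<Phi> \<longleftrightarrow>
     (\<exists>k>1. \<forall>t>0. \<Phi> t \<le> \<Phi> (k * t) / (2 * k))"

end

theory Submission
  imports Defs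
begin

text \<open>Convexity and \<open>\<Phi> 0 = 0\<close> make \<open>\<Phi> t / t\<close> nondecreasing, and each application of the
  \<open>\<nabla>\<^sub>2\<close>-condition doubles it, so \<open>\<Phi>\<close> grows superlinearly. The hypothesis then gives
  \<open>\<bar>f y - f x\<bar> / \<bar>y - x\<bar> \<le> D t / \<Phi> t\<close> with \<open>t = 1 / (D \<bar>y - x\<bar>) \<rightarrow> \<infinity>\<close> as \<open>y \<rightarrow> x\<close>,
  so \<open>f\<close> has derivative \<open>0\<close> everywhere on the interval and is therefore constant there.\<close>

lemma convex_on_ratio_mono:
  fixes \<Phi> :: "real \<Rightarrow> real"
  assumes "convex_on {0..} \<Phi>" "\<Phi> 0 \<le> 0" "0 < s" "s \<le> t"
  shows "\<Phi> s / s \<le> \<Phi> t / t"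
proof -
  have "\<Phi> ((1 - s/t) *\<^sub>R 0 + (s/t) *\<^sub>R t) \<le> (1 - s/t) * \<Phi> 0 + (s/t) * \<Phi> t"
    using assms by (intro convex_onD[OF assms(1)]) auto
  also have "\<dots> \<le> (s/t) * \<Phi> t"
    using assms by (simp add: mult_nonneg_nonpos)
  finally have "\<Phi> s \<le> (s/t) * \<Phi> t"
    using assms by simp
  then show ?thesis
    using assms by (simp add: field_simps)
qed

lemma nabla2_ratio_pow:
  fixes \<Phi> :: "real \<Rightarrow> real"
  assumes k: "k > 1" and nabla2: "\<And>t. t > 0 \<Longrightarrow> \<Phi> t \<le> \<Phi> (k * t) / (2 * k)" and "t > 0"
  shows "2 ^ m * (\<Phi> t / t) \<le> \<Phi> (k ^ m * t) / (k ^ m * t)"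
proof (induction m)
  case 0
  show ?case by simp
next
  case (Suc m)
  have pos: "k ^ m * t > 0"
    using k \<open>t > 0\<close> by simp
  have "\<Phi> (k ^ m * t) \<le> \<Phi> (k * (k ^ m * t)) / (2 * k)"
    using nabla2[OF pos] .
  then have "2 * (\<Phi> (k ^ m * t) / (k ^ m * t)) \<le> \<Phi> (k ^ Suc m * t) / (k ^ Suc m * t)"
    using pos k \<open>t > 0\<close> by (simp add: field_simps)
  with Suc.IH show ?case by simp
qed

lemma young_nabla2_ratio_at_top:
  fixes \<Phi> :: "real \<Rightarrow> real"
  assumes young: "young_function \<Phi>" and "nabla2_condition \<Phi>"
  shows "filterlim (\<lambda>t. \<Phi> t / t) at_top at_top"
proof (rule filterlim_at_top_ge[where c = 0, THEN iffD2], intro allI impI)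
  fix M :: real
  obtain k where k: "k > 1" and nabla2: "\<And>t. t > 0 \<Longrightarrow> \<Phi> t \<le> \<Phi> (k * t) / (2 * k)"
    using \<open>nabla2_condition \<Phi>\<close> by (auto simp: nabla2_condition_def)
  have convex: "convex_on {0..} \<Phi>" and "\<Phi> 0 = 0" and "\<Phi> 1 > 0"
    using young by (auto simp: young_function_def)
  obtain m where "M / \<Phi> 1 < 2 ^ m"
    using real_arch_pow[of 2 "M / \<Phi> 1"] by auto
  then have "M \<le> 2 ^ m * \<Phi> 1"
    using \<open>\<Phi> 1 > 0\<close> by (simp add: field_simps)
  also have "\<dots> \<le> \<Phi> (k ^ m) / k ^ m"
    using nabla2_ratio_pow[where \<Phi> = \<Phi> and k = k and t = 1 and m = m] k nabla2 by simp
  finally have "M \<le> \<Phi> (k ^ m) / k ^ m" .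
  moreover have "\<forall>\<^sub>F t in at_top. \<Phi> (k ^ m) / k ^ m \<le> \<Phi> t / t"
    using k convex_on_ratio_mono[OF convex, of "k ^ m"] \<open>\<Phi> 0 = 0\<close>
    by (auto simp: eventually_at_top_linorder)
  ultimately show "\<forall>\<^sub>F t in at_top. M \<le> \<Phi> t / t"
    by (auto elim: eventually_mono)
qed

lemma has_field_derivative_zero_if_superlinear_modulus:
  fixes f :: "real \<Rightarrow> real" and \<Phi> :: "real \<Rightarrow> real"
  assumes superlinear: "filterlim (\<lambda>t. \<Phi> t / t) at_top at_top"
    and "D > 0"
    and modulus: "\<forall>x\<in>S. \<forall>y\<in>S. x \<noteq> y \<longrightarrow> \<bar>f x - f y\<bar> \<le> inverse (\<Phi> (1 / (D * \<bar>x - y\<bar>)))"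
    and "x \<in> S"
  shows "(f has_field_derivative 0) (at x within S)"
proof -
  define t where "t y = inverse (D * \<bar>y - x\<bar>)" for y
  have t_at_top: "filterlim t at_top (at x within S)"
    unfolding t_def
  proof (rule filterlim_inverse_at_top)
    show "((\<lambda>y. D * \<bar>y - x\<bar>) \<longlongrightarrow> 0) (at x within S)"
      by (auto intro!: tendsto_eq_intros)
    show "\<forall>\<^sub>F y in at x within S. 0 < D * \<bar>y - x\<bar>"
      using \<open>D > 0\<close> by (auto simp: eventually_at_filter)
  qed
  have "((\<lambda>s. inverse (\<Phi> s / s)) \<longlongrightarrow> 0) at_top"
    using superlinear by (rule tendsto_inverse_0_at_top)
  then have bound_tendsto: "((\<lambda>y. D * inverse (\<Phi> (t y) / t y)) \<longlongrightarrow> 0) (at x within S)"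
    by (intro tendsto_mult_right_zero filterlim_compose[OF _ t_at_top])
  have eventually_bound: "\<forall>\<^sub>F y in at x within S.
      norm ((f y - f x) / (y - x)) \<le> D * inverse (\<Phi> (t y) / t y)"
  proof (rule eventually_at_filter[THEN iffD2], rule always_eventually, intro allI impI)
    fix y assume "y \<noteq> x" "y \<in> S"
    then have "\<bar>f y - f x\<bar> \<le> inverse (\<Phi> (t y))"
      using modulus \<open>x \<in> S\<close> unfolding t_def inverse_eq_divide by blast
    then have "norm ((f y - f x) / (y - x)) \<le> inverse (\<Phi> (t y)) / \<bar>y - x\<bar>"
      by (simp add: divide_right_mono)
    also have "\<dots> = (D * t y) * inverse (\<Phi> (t y))"
      using \<open>y \<noteq> x\<close> \<open>D > 0\<close> by (simp add: t_def divide_inverse)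
    also have "\<dots> = D * inverse (\<Phi> (t y) / t y)"
      by (metis divide_inverse inverse_divide times_divide_eq_right)
    finally show "norm ((f y - f x) / (y - x)) \<le> D * inverse (\<Phi> (t y) / t y)" .
  qed
  show ?thesis
    unfolding has_field_derivative_iff by (rule Lim_null_comparison[OF eventually_bound bound_tendsto])
qed

theorem lemma5p4:
  fixes f :: "real \<Rightarrow> real" and I :: "real set" and \<Phi> :: "real \<Rightarrow> real"
  assumes "is_interval I"
    and "young_function \<Phi>"
    and "nabla2_condition \<Phi>"
    and "\<exists>D>0. \<forall>x\<in>I. \<forall>y\<in>I. x \<noteq> y \<longrightarrow>
           \<bar>f x - f y\<bar> \<le> inverse (\<Phi> (1 / (D * \<bar>x - y\<bar>)))"
  shows "\<exists>c. \<forall>x\<in>I. f x = c"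
proof (rule has_field_derivative_zero_constant)
  show "convex I"
    using \<open>is_interval I\<close> by (simp add: is_interval_convex_1)
  obtain D where "D > 0" and modulus: "\<forall>x\<in>I. \<forall>y\<in>I. x \<noteq> y \<longrightarrow>
      \<bar>f x - f y\<bar> \<le> inverse (\<Phi> (1 / (D * \<bar>x - y\<bar>)))"
    using assms(4) by blast
  show "(f has_field_derivative 0) (at x within I)" if "x \<in> I" for x
    using has_field_derivative_zero_if_superlinear_modulus[OF
        young_nabla2_ratio_at_top[OF assms(2,3)] \<open>D > 0\<close> modulus that] .
qed

end
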